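(* Let $0<v_T<\tfrac12$ and $V_u>v_T$, and put $$k_{\rm peak}=\frac{V_u}{v_T}-1,\qquad g_{\rm peak}=\frac{F'(v_T)\,v_T}{V_u}.$$ Then: (a) for every $g>0$ and $k\ge 0$ such that the central cell fires when $v_u$ is raised from $0$ to $V_u$, one has $k<k_{\rm peak}$; (b) for $g=g_{\rm peak}$ and $k\ge0$, the central cell fires when $v_u$ is raised from $0$ to $V_u$ if and only if $k<k_{\rm peak}$. In particular, the supremum over all $g>0$ of $\sup\{k\ge 0:\ \text{the cell fires with parameters }(g,k)\}$ equals $k_{\rm peak}$ and is attained at $g=g_{\rm peak}$.
   Context: Fix $v_T\in(0,\tfrac12)$ and let $F(v)=v(v-v_T)(1-v)$, with local minimum at $v_{\min}$, local maximum at $v_{\max}$, inflection point $v_i=(1+v_T)/3$; $0<v_{\min}<v_T<v_i<v_{\max}<1$. Central-cell model: for $g>0$, real $k\ge0$ and upstream voltage $v_u$, $\frac{dv}{dt}=F(v)+g(v_u-v)-gkv$; equilibria solve $F(v)=g(k+1)v-gv_u$. Firing: given $V_u>0$, the central cell fires when $v_u$ is raised from $0$ to $V_u$ if there exist $v_{u,c}\in(0,V_u)$ and $v^*\in(v_{\min},v_i)$ with $F(v^* )=g(k+1)v^*-gv_{u,c}$ and $F'(v^* )=g(k+1)$ (a saddle-node collision of the rest and threshold equilibria). *)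

theory Defs
  imports "HOL-Analysis.Analysis"
begin

definition F :: "real \<Rightarrow> real \<Rightarrow> real" where
  "F vT v = v * (v - vT) * (1 - v)"

text \<open>Local minimum of F: the smaller critical point (smaller root of F' = 0).\<close>
definition v_min :: "real \<Rightarrow> real" where
  "v_min vT = ((1 + vT) - sqrt ((1 + vT)^2 - 3 * vT)) / 3"

text \<open>Inflection point of F.\<close>
definition v_i :: "real \<Rightarrow> real" where
  "v_i vT = (1 + vT) / 3"

text \<open>Firing: a saddle-node collision of rest and threshold equilibria occurs for
  some intermediate upstream voltage v_uc in (0, Vu).\<close>
definition fires :: "real \<Rightarrow> real \<Rightarrow> real \<Rightarrow> real \<Rightarrow> bool" where
  "fires vT g k Vu \<longleftrightarrow>
     (\<exists>vuc v. 0 < vuc \<and> vuc < Vu \<and> v_min vT < v \<and> v < v_i vT \<and>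
        F vT v = g * (k + 1) * v - g * vuc \<and>
        deriv (F vT) v = g * (k + 1))"

end

theory Submission
  imports Defs
begin

text \<open>A saddle node at \<open>v\<close> means \<open>g (k + 1) = F'(v)\<close> and, eliminating \<open>k\<close>,
  \<open>g vuc = v F'(v) - F(v) = v\<^sup>2 (1 + vT - 2 v)\<close>.  The identity
  \<open>v\<^sup>2 (1 + vT - 2 v) - vT F'(v) = (v - vT)\<^sup>2 (1 - 2 v)\<close> gives
  \<open>vT g (k + 1) \<le> g vuc < g Vu\<close> for \<open>v < 1/2\<close>, i.e. \<open>k < Vu / vT - 1\<close>.
  For \<open>g = g_peak\<close> this bound is sharp, with equality exactly at \<open>v = vT\<close>: every value
  \<open>g (k + 1)\<close> in \<open>(F'(v_min), F'(vT))\<close> is taken by \<open>F'\<close> at some \<open>v \<in> (v_min, vT)\<close>, and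
  since \<open>v\<^sup>2 (1 + vT - 2 v)\<close> increases below the inflection point, the corresponding
  \<open>vuc\<close> stays below its value \<open>Vu\<close> at \<open>v = vT\<close>.\<close>

definition saddle_node_input :: "real \<Rightarrow> real \<Rightarrow> real" where
  "saddle_node_input vT v = v\<^sup>2 * (1 + vT - 2 * v)"

lemma deriv_F: "deriv (F vT) v = - 3 * v\<^sup>2 + 2 * (1 + vT) * v - vT"
proof -
  have "(F vT has_real_derivative - 3 * v\<^sup>2 + 2 * (1 + vT) * v - vT) (at v)"
    unfolding F_def[abs_def]
    by (auto intro!: derivative_eq_intros simp: power2_eq_square algebra_simps)
  then show ?thesis
    by (rule DERIV_imp_deriv)
qed

lemma deriv_F_at_threshold: "deriv (F vT) vT = vT * (1 - vT)"
  by (simp add: deriv_F power2_eq_square algebra_simps)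

lemma continuous_on_deriv_F: "continuous_on S (deriv (F vT))"
  unfolding deriv_F by (intro continuous_intros)

lemma v_min_bounds_and_deriv_F:
  assumes "0 < vT" "vT < 1/2"
  shows "0 < v_min vT" "v_min vT < vT" "deriv (F vT) (v_min vT) = 0"
proof -
  define s where "s = sqrt ((1 + vT)\<^sup>2 - 3 * vT)"
  have discr: "(1 + vT)\<^sup>2 - 3 * vT = (vT - 1/2)\<^sup>2 + 3/4"
    by (simp add: power2_eq_square algebra_simps)
  then have discr_nonneg: "0 \<le> (1 + vT)\<^sup>2 - 3 * vT"
    using zero_le_power2[of "vT - 1/2"] by linarith
  then have s_sq: "s\<^sup>2 = (1 + vT)\<^sup>2 - 3 * vT"
    unfolding s_def by (rule real_sqrt_pow2)
  have "0 \<le> s"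
    unfolding s_def using discr_nonneg by (rule real_sqrt_ge_zero)
  have "s\<^sup>2 < (1 + vT)\<^sup>2"
    using s_sq assms by simp
  moreover have "0 \<le> 1 + vT"
    using assms by simp
  ultimately have "s < 1 + vT"
    by (rule power_less_imp_less_base)
  moreover have "1 - 2 * vT < s"
  proof -
    have "s\<^sup>2 - (1 - 2 * vT)\<^sup>2 = 3 * vT * (1 - vT)"
      using s_sq by (simp add: power2_eq_square algebra_simps)
    moreover have "0 < 3 * vT * (1 - vT)"
      using assms by simp
    ultimately have "(1 - 2 * vT)\<^sup>2 < s\<^sup>2"
      by linarith
    then show ?thesis
      using \<open>0 \<le> s\<close> by (rule power_less_imp_less_base)
  qed
  moreover have "deriv (F vT) ((1 + vT - s) / 3) = 0"
    using s_sq by (simp add: deriv_F power2_eq_square field_simps)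
  ultimately show "0 < v_min vT" "v_min vT < vT" "deriv (F vT) (v_min vT) = 0"
    unfolding v_min_def s_def[symmetric] by auto
qed

lemma saddle_node_input_pos:
  assumes "0 < v" "v < v_i vT"
  shows "0 < saddle_node_input vT v"
  using assms by (simp add: saddle_node_input_def v_i_def)

lemma threshold_deriv_F_le_saddle_node_input:
  assumes "v \<le> 1/2"
  shows "vT * deriv (F vT) v \<le> saddle_node_input vT v"
proof -
  have "saddle_node_input vT v - vT * deriv (F vT) v = (v - vT)\<^sup>2 * (1 - 2 * v)"
    by (simp add: saddle_node_input_def deriv_F power2_eq_square algebra_simps)
  moreover have "0 \<le> (v - vT)\<^sup>2 * (1 - 2 * v)"
    using assms by simp
  ultimately show ?thesis
    by linarith
qed

lemma saddle_node_input_strict_mono: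
  assumes "0 \<le> v" "v < w" "w \<le> v_i vT"
  shows "saddle_node_input vT v < saddle_node_input vT w"
proof -
  define c where "c = (1 + vT) / 3"
  have "w\<^sup>2 + w * v + v\<^sup>2 < 3/2 * c * (w + v)"
  proof -
    have "v < c" "w \<le> c" "0 < w"
      using assms unfolding c_def v_i_def by auto
    then have "w * w \<le> c * w" "v * v \<le> c * v" "w * v \<le> c * v" "w * v < c * w"
      using \<open>0 \<le> v\<close> by (auto intro: mult_right_mono)
    then show ?thesis
      by (simp add: power2_eq_square algebra_simps)
  qed
  moreover have "saddle_node_input vT w - saddle_node_input vT v
      = (w - v) * (3 * c * (w + v) - 2 * (w\<^sup>2 + w * v + v\<^sup>2))"
    by (simp add: saddle_node_input_def c_def power2_eq_square field_simps)
  moreover have "0 < (w - v) * (3 * c * (w + v) - 2 * (w\<^sup>2 + w * v + v\<^sup>2))"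
    using calculation(1) assms(2) by (intro mult_pos_pos) auto
  ultimately show ?thesis
    by linarith
qed

lemma saddle_node_input_eq: "v * deriv (F vT) v - F vT v = saddle_node_input vT v"
  by (simp add: F_def deriv_F saddle_node_input_def power2_eq_square algebra_simps)

lemma saddle_node_iff:
  "(F vT v = g * (k + 1) * v - g * vuc \<and> deriv (F vT) v = g * (k + 1))
     \<longleftrightarrow> (deriv (F vT) v = g * (k + 1) \<and> g * vuc = saddle_node_input vT v)"
proof (cases "deriv (F vT) v = g * (k + 1)")
  case True
  then have "g * (k + 1) * v - F vT v = saddle_node_input vT v"
    using saddle_node_input_eq[of v vT] by (simp add: mult.commute)
  then show ?thesis
    using True by auto
qed simp

lemma fires_iff:
  assumes "0 < vT" "vT < 1/2" "g > 0"
  shows "fires vT g k Vu \<longleftrightarrow> (\<exists>v. v_min vT < v \<and> v < v_i vT \<and>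
           deriv (F vT) v = g * (k + 1) \<and> saddle_node_input vT v < g * Vu)"
proof
  assume "fires vT g k Vu"
  then obtain vuc v where "vuc < Vu" "v_min vT < v" "v < v_i vT"
      "deriv (F vT) v = g * (k + 1)" "g * vuc = saddle_node_input vT v"
    unfolding fires_def saddle_node_iff by blast
  moreover have "g * vuc < g * Vu"
    using \<open>vuc < Vu\<close> \<open>g > 0\<close> by simp
  ultimately show "\<exists>v. v_min vT < v \<and> v < v_i vT \<and>
      deriv (F vT) v = g * (k + 1) \<and> saddle_node_input vT v < g * Vu"
    by auto
next
  assume "\<exists>v. v_min vT < v \<and> v < v_i vT \<and>
           deriv (F vT) v = g * (k + 1) \<and> saddle_node_input vT v < g * Vu"
  then obtain v where v: "v_min vT < v" "v < v_i vT" "deriv (F vT) v = g * (k + 1)"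
      and below: "saddle_node_input vT v < g * Vu"
    by blast
  define vuc where "vuc = saddle_node_input vT v / g"
  have "0 < v"
    using v(1) v_min_bounds_and_deriv_F(1)[OF assms(1,2)] by linarith
  then have "0 < vuc"
    unfolding vuc_def using saddle_node_input_pos[OF _ v(2)] \<open>g > 0\<close> by simp
  moreover have "vuc < Vu"
    unfolding vuc_def using below \<open>g > 0\<close> by (simp add: divide_less_eq mult.commute)
  moreover have "g * vuc = saddle_node_input vT v"
    unfolding vuc_def using \<open>g > 0\<close> by simp
  ultimately show "fires vT g k Vu"
    unfolding fires_def saddle_node_iff using v by blast
qed

lemma fires_imp_less_k_peak:
  assumes "0 < vT" "vT < 1/2" "g > 0" "fires vT g k Vu"
  shows "k < Vu / vT - 1"
proof -
  obtain v where v: "v < v_i vT" "deriv (F vT) v = g * (k + 1)"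
      and below: "saddle_node_input vT v < g * Vu"
    using assms fires_iff by blast
  have "v \<le> 1/2"
    using v(1) assms(2) by (simp add: v_i_def)
  then have "g * (vT * (k + 1)) < g * Vu"
    using threshold_deriv_F_le_saddle_node_input[of v vT] v(2) below
    by (simp add: mult.left_commute)
  then have "vT * (k + 1) < Vu"
    using \<open>g > 0\<close> by simp
  then show ?thesis
    using \<open>0 < vT\<close> by (simp add: field_simps)
qed

lemma fires_at_g_peak:
  assumes "0 < vT" "vT < 1/2" "vT < Vu" "0 \<le> k" "k < Vu / vT - 1"
  shows "fires vT (deriv (F vT) vT * vT / Vu) k Vu"
proof -
  define g where "g = deriv (F vT) vT * vT / Vu"
  have g_Vu: "g * Vu = saddle_node_input vT vT"
    using assms(3,1) by (simp add: g_def deriv_F_at_threshold saddle_node_input_def power2_eq_square)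
  have "g > 0"
    using assms(1-3) by (simp add: g_def deriv_F_at_threshold)
  have "vT * (k + 1) < Vu"
    using assms(1,5) by (simp add: field_simps)
  then have "vT * (k + 1) / Vu < 1"
    using assms(1,3) by simp
  moreover have "0 < deriv (F vT) vT"
    using assms(1,2) by (simp add: deriv_F_at_threshold)
  moreover have "g * (k + 1) = deriv (F vT) vT * (vT * (k + 1) / Vu)"
    by (simp add: g_def)
  ultimately have below_threshold: "g * (k + 1) < deriv (F vT) vT"
    using mult_strict_left_mono[of "vT * (k + 1) / Vu" 1 "deriv (F vT) vT"] by simp
  have above_v_min: "deriv (F vT) (v_min vT) < g * (k + 1)"
    using v_min_bounds_and_deriv_F(3)[OF assms(1,2)] \<open>g > 0\<close> assms(4) by simp
  obtain v where "v_min vT \<le> v" "v \<le> vT" and v_root: "deriv (F vT) v = g * (k + 1)"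
    using IVT'[of "deriv (F vT)" "v_min vT" "g * (k + 1)" vT] continuous_on_deriv_F
      v_min_bounds_and_deriv_F(2)[OF assms(1,2)] below_threshold above_v_min
    by fastforce
  moreover have "v \<noteq> v_min vT" "v \<noteq> vT"
    using v_root below_threshold above_v_min by auto
  ultimately have v: "v_min vT < v" "v < vT" "deriv (F vT) v = g * (k + 1)"
    using v_root by auto
  have "0 < v"
    using v(1) v_min_bounds_and_deriv_F(1)[OF assms(1,2)] by linarith
  have "vT \<le> v_i vT"
    using assms(2) by (simp add: v_i_def)
  then have "saddle_node_input vT v < g * Vu"
    unfolding g_Vu using saddle_node_input_strict_mono \<open>0 < v\<close> v(2) by simp
  moreover have "v < v_i vT"
    using v(2) \<open>vT \<le> v_i vT\<close> by simp
  ultimately show ?thesis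
    unfolding g_def[symmetric] using fires_iff[OF assms(1,2) \<open>g > 0\<close>] v by blast
qed

theorem mainTheorem3:
  fixes vT Vu :: real
  assumes "0 < vT" and "vT < 1/2" and "Vu > vT"
  defines "k_peak \<equiv> Vu / vT - 1"
      and "g_peak \<equiv> deriv (F vT) vT * vT / Vu"
  shows "(\<forall>g k. g > 0 \<longrightarrow> k \<ge> 0 \<longrightarrow> fires vT g k Vu \<longrightarrow> k < k_peak)
       \<and> (\<forall>k. k \<ge> 0 \<longrightarrow> (fires vT g_peak k Vu \<longleftrightarrow> k < k_peak))
       \<and> Sup {k. k \<ge> 0 \<and> (\<exists>g>0. fires vT g k Vu)} = k_peak
       \<and> Sup {k. k \<ge> 0 \<and> fires vT g_peak k Vu} = k_peak"
proof -
  have "g_peak > 0" "k_peak > 0"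
    using assms(1-3) by (simp_all add: g_peak_def k_peak_def deriv_F_at_threshold field_simps)
  have below: "k < k_peak" if "g > 0" "fires vT g k Vu" for g k
    using fires_imp_less_k_peak[OF assms(1,2) that] by (simp add: k_peak_def)
  have at_peak: "fires vT g_peak k Vu" if "0 \<le> k" "k < k_peak" for k
    using fires_at_g_peak[OF assms(1-3) that[unfolded k_peak_def]] by (simp add: g_peak_def)
  have "{k. k \<ge> 0 \<and> (\<exists>g>0. fires vT g k Vu)} = {0..<k_peak}"
    using below at_peak \<open>g_peak > 0\<close> by fastforce
  moreover have "{k. k \<ge> 0 \<and> fires vT g_peak k Vu} = {0..<k_peak}"
    using below at_peak \<open>g_peak > 0\<close> by fastforce
  moreover have "\<forall>k. k \<ge> 0 \<longrightarrow> (fires vT g_peak k Vu \<longleftrightarrow> k < k_peak)"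
    using below at_peak \<open>g_peak > 0\<close> by blast
  ultimately show ?thesis
    using below cSup_atLeastLessThan[OF \<open>k_peak > 0\<close>] by simp
qed

end
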